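(* In the multi-product pricing model of the context with a positive vector $f\in\mathbb{R}^n$, suppose that (P1) for every $j\in M$ and every $i\in N$, $d_{ij}(p)$ is (weakly) increasing in $p_k$ for every $k\ne i$; and (P2) for every $j\in M$, $\sum_{i\in N}f_id_{ij}(p)$ is (weakly) decreasing in $p_i$ for every $i\in N$. Then Assumption A1 holds, i.e. $G(q)\le H(q)$ for all $q\ge0$.
   Context: Products $N=\{1,\dots,n\}$, customer types $M=\{1,\dots,m\}$, non-negative demand functions $d_{ij}:\mathbb{R}^n_{\ge0}\to\mathbb{R}_{\ge0}$ (demand for product $i$ by type $j$ at price vector $p$); $R_j(p)=\sum_ip_id_{ij}(p)$; weights $\theta_j>0$ with $\sum_j\theta_j=1$. For each $j$, $\bar p^j=(\bar p_{1j},\dots,\bar p_{nj})$ is a maximizer of $R_j$ over $p\ge0$ with positive finite components. For $q\ge 0$, $\delta_{ij}(q):=1$ if $q\le\bar p_{ij}/f_i$ and $0$ otherwise, $G(q):=\sum_j\theta_j\sum_if_id_{ij}(\bar p^j)\delta_{ij}(q)$, and $H(q):=\sum_j\theta_j\sum_if_id_{ij}(qf)$. Assumption A1 is the statement $G(q)\le H(q)$ for all $q\ge0$. *)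

theory Defs
  imports Complex_Main
begin

text \<open>Products are indexed by a finite type 'n (the set N), customer types by a finite
type 'm (the set M). Price vectors are functions 'n \<Rightarrow> real.
d i j p is the demand for product i by type j at price vector p.
pbar j i is the component i of the revenue-maximising price vector of type j.\<close>

definition nonneg_vec :: "('n \<Rightarrow> real) \<Rightarrow> bool" where
  "nonneg_vec p \<longleftrightarrow> (\<forall>i. 0 \<le> p i)"

definition revenue :: "('n \<Rightarrow> 'm \<Rightarrow> ('n \<Rightarrow> real) \<Rightarrow> real) \<Rightarrow> 'm \<Rightarrow> ('n::finite \<Rightarrow> real) \<Rightarrow> real" where
  "revenue d j p = (\<Sum>i\<in>UNIV. p i * d i j p)"

definition delta :: "('m \<Rightarrow> 'n \<Rightarrow> real) \<Rightarrow> ('n \<Rightarrow> real) \<Rightarrow> 'n \<Rightarrow> 'm \<Rightarrow> real \<Rightarrow> real" where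
  "delta pbar f i j q = (if q \<le> pbar j i / f i then 1 else 0)"

definition Gfun :: "('n::finite \<Rightarrow> 'm::finite \<Rightarrow> ('n \<Rightarrow> real) \<Rightarrow> real) \<Rightarrow> ('m \<Rightarrow> real)
    \<Rightarrow> ('m \<Rightarrow> 'n \<Rightarrow> real) \<Rightarrow> ('n \<Rightarrow> real) \<Rightarrow> real \<Rightarrow> real" where
  "Gfun d theta pbar f q =
     (\<Sum>j\<in>UNIV. theta j * (\<Sum>i\<in>UNIV. f i * d i j (pbar j) * delta pbar f i j q))"

definition Hfun :: "('n::finite \<Rightarrow> 'm::finite \<Rightarrow> ('n \<Rightarrow> real) \<Rightarrow> real) \<Rightarrow> ('m \<Rightarrow> real)
    \<Rightarrow> ('n \<Rightarrow> real) \<Rightarrow> real \<Rightarrow> real" where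
  "Hfun d theta f q =
     (\<Sum>j\<in>UNIV. theta j * (\<Sum>i\<in>UNIV. f i * d i j (\<lambda>k. q * f k)))"

end

theory Submission
  imports Defs
begin

text \<open>Fix a customer type and a price level q, and let S be the set of products with
q f_i \<le> pbar_i. Starting from pbar, first raise every price outside S to q f: by (P1)
this does not decrease the demand for any product in S. Then lower every price in S
to q f: by (P2) this does not decrease the f-weighted total demand. The result is the
price vector q f, so the f-weighted demand for S at pbar, which is the contribution of
the type to G(q), is bounded by its contribution to H(q).\<close>

lemma le_override_on_coordinatewise:
  fixes F :: "('a \<Rightarrow> real) \<Rightarrow> real"
  assumes "finite A" and "nonneg_vec p"
    and g_nonneg: "\<forall>k\<in>A. 0 \<le> g k"
    and "\<forall>k\<in>A. C (p k) (g k)"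
    and step: "\<And>p' k. k \<in> A \<Longrightarrow> nonneg_vec p' \<Longrightarrow> C (p' k) (g k) \<Longrightarrow> F p' \<le> F (p'(k := g k))"
  shows "F p \<le> F (override_on p g A)"
  using assms(1,2,4) g_nonneg step
proof (induction A rule: finite_induct)
  case empty
  then show ?case by simp
next
  case (insert a A)
  let ?p' = "override_on p g A"
  have "nonneg_vec ?p'"
    using insert.prems unfolding nonneg_vec_def override_on_def by auto
  moreover have "C (?p' a) (g a)"
    using insert.hyps(2) insert.prems(2) by simp
  ultimately have "F ?p' \<le> F (?p'(a := g a))"
    using insert.prems(4) by blast
  moreover have "F p \<le> F ?p'"
    using insert by simp
  ultimately show ?case
    unfolding override_on_insert by (rule order_trans[rotated])
qed

lemma weighted_demand_le_weighted_demand_at_scaled_prices: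
  fixes D :: "'n::finite \<Rightarrow> ('n \<Rightarrow> real) \<Rightarrow> real"
    and pbar f :: "'n \<Rightarrow> real"
  assumes D_nonneg: "\<And>i p. nonneg_vec p \<Longrightarrow> 0 \<le> D i p"
    and pbar_nonneg: "nonneg_vec pbar"
    and f_nonneg: "\<And>i. 0 \<le> f i"
    and q: "0 \<le> q"
    and P1: "\<And>i k p t. k \<noteq> i \<Longrightarrow> nonneg_vec p \<Longrightarrow> p k \<le> t \<Longrightarrow> D i p \<le> D i (p(k := t))"
    and P2: "\<And>i p t. nonneg_vec p \<Longrightarrow> p i \<le> t \<Longrightarrow>
               (\<Sum>l\<in>UNIV. f l * D l (p(i := t))) \<le> (\<Sum>l\<in>UNIV. f l * D l p)"
  shows "(\<Sum>i | q * f i \<le> pbar i. f i * D i pbar) \<le> (\<Sum>i\<in>UNIV. f i * D i (\<lambda>k. q * f k))"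
proof -
  define S where "S = {i. q * f i \<le> pbar i}"
  define qf where "qf = (\<lambda>k. q * f k)"
  define p1 where "p1 = override_on pbar qf (- S)"
  have qf_nonneg: "0 \<le> qf k" for k
    using q f_nonneg by (simp add: qf_def)
  have p1_nonneg: "nonneg_vec p1"
    using pbar_nonneg qf_nonneg by (simp add: nonneg_vec_def p1_def override_on_def)
  have raise: "D i pbar \<le> D i p1" if "i \<in> S" for i
    unfolding p1_def
  proof (rule le_override_on_coordinatewise[where C = "(\<le>)"])
    show "\<forall>k\<in>- S. pbar k \<le> qf k"
      by (auto simp: S_def qf_def)
    show "D i p' \<le> D i (p'(k := qf k))" if "k \<in> - S" "nonneg_vec p'" "p' k \<le> qf k" for p' k
      using P1[of k i p' "qf k"] that \<open>i \<in> S\<close> by auto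
  qed (use pbar_nonneg qf_nonneg in auto)
  have lower: "(\<Sum>l\<in>UNIV. f l * D l p1) \<le> (\<Sum>l\<in>UNIV. f l * D l (override_on p1 qf S))"
  proof (rule le_override_on_coordinatewise[where C = "\<lambda>old new. new \<le> old"])
    show "\<forall>k\<in>S. qf k \<le> p1 k"
      by (auto simp: S_def qf_def p1_def)
    show "(\<Sum>l\<in>UNIV. f l * D l p') \<le> (\<Sum>l\<in>UNIV. f l * D l (p'(k := qf k)))"
      if "nonneg_vec p'" "qf k \<le> p' k" for p' k
      using P2[of "p'(k := qf k)" k "p' k"] that qf_nonneg by (simp add: nonneg_vec_def)
  qed (use p1_nonneg qf_nonneg in auto)
  have "(\<Sum>i\<in>S. f i * D i pbar) \<le> (\<Sum>i\<in>S. f i * D i p1)"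
    using raise f_nonneg by (simp add: sum_mono mult_left_mono)
  also have "\<dots> \<le> (\<Sum>i\<in>UNIV. f i * D i p1)"
    using D_nonneg[OF p1_nonneg] f_nonneg by (intro sum_mono2) auto
  also have "\<dots> \<le> (\<Sum>l\<in>UNIV. f l * D l (override_on p1 qf S))"
    by (fact lower)
  also have "override_on p1 qf S = qf"
    by (auto simp: p1_def override_on_def)
  finally show ?thesis
    by (simp add: S_def qf_def)
qed

theorem proposition1:
  fixes d :: "'n::finite \<Rightarrow> 'm::finite \<Rightarrow> ('n \<Rightarrow> real) \<Rightarrow> real"
    and theta :: "'m \<Rightarrow> real"
    and pbar :: "'m \<Rightarrow> 'n \<Rightarrow> real"
    and f :: "'n \<Rightarrow> real"
  assumes d_nonneg: "\<And>i j p. nonneg_vec p \<Longrightarrow> 0 \<le> d i j p"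
    and theta_pos: "\<And>j. 0 < theta j"
    and theta_sum: "(\<Sum>j\<in>UNIV. theta j) = 1"
    and pbar_pos: "\<And>i j. 0 < pbar j i"
    and pbar_max: "\<And>j p. nonneg_vec p \<Longrightarrow> revenue d j p \<le> revenue d j (pbar j)"
    and f_pos: "\<And>i. 0 < f i"
    and P1: "\<And>j i k p t. k \<noteq> i \<Longrightarrow> nonneg_vec p \<Longrightarrow> p k \<le> t \<Longrightarrow>
               d i j p \<le> d i j (p(k := t))"
    and P2: "\<And>j i p t. nonneg_vec p \<Longrightarrow> p i \<le> t \<Longrightarrow>
               (\<Sum>l\<in>UNIV. f l * d l j (p(i := t))) \<le> (\<Sum>l\<in>UNIV. f l * d l j p)"
  shows "\<forall>q\<ge>0. Gfun d theta pbar f q \<le> Hfun d theta f q"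
proof (intro allI impI)
  fix q :: real
  assume q: "0 \<le> q"
  have per_type: "(\<Sum>i\<in>UNIV. f i * d i j (pbar j) * delta pbar f i j q)
      \<le> (\<Sum>i\<in>UNIV. f i * d i j (\<lambda>k. q * f k))" for j
  proof -
    have "{i. q \<le> pbar j i / f i} = {i. q * f i \<le> pbar j i}"
      using f_pos by (simp add: pos_le_divide_eq)
    then have "(\<Sum>i\<in>UNIV. f i * d i j (pbar j) * delta pbar f i j q)
        = (\<Sum>i | q * f i \<le> pbar j i. f i * d i j (pbar j))"
      by (simp add: delta_def sum.If_cases if_distrib cong: if_cong)
    also have "\<dots> \<le> (\<Sum>i\<in>UNIV. f i * d i j (\<lambda>k. q * f k))"
    proof (rule weighted_demand_le_weighted_demand_at_scaled_prices[OF d_nonneg _ _ q P1 P2])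
      show "nonneg_vec (pbar j)"
        using pbar_pos by (simp add: nonneg_vec_def less_imp_le)
      show "0 \<le> f i" for i
        using f_pos[of i] by simp
    qed
    finally show ?thesis .
  qed
  show "Gfun d theta pbar f q \<le> Hfun d theta f q"
    unfolding Gfun_def Hfun_def
  proof (rule sum_mono)
    show "theta j * (\<Sum>i\<in>UNIV. f i * d i j (pbar j) * delta pbar f i j q)
        \<le> theta j * (\<Sum>i\<in>UNIV. f i * d i j (\<lambda>k. q * f k))" for j
      using per_type theta_pos[of j] by (simp add: mult_left_mono)
  qed
qed

end
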